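(* Let $X_n,Y_n,X,Y$ ($n=1,2,\dots$) be mm-spaces and $F_n,F\in\mathcal F^2$ with $F_n\to F$ pointwise and such that for every $s,t\ge0$, $\lim_{n\to\infty}\big(F_n(s,t)-\inf_{s\le s',t\le t'}F_n(s',t')\big)=0$. Let $p_n\colon X_n\to X$ and $q_n\colon Y_n\to Y$ be Borel maps such that $p_n$ is 1-Lipschitz up to $\varepsilon_n$, $q_n$ is 1-Lipschitz up to $\delta_n$, $\pi((p_n)_*m_{X_n},m_X)\le\varepsilon_n$ and $\pi((q_n)_*m_{Y_n},m_Y)\le\delta_n$, where $\varepsilon_n,\delta_n\to0$. Then there is a sequence $\eta_n\to0$ such that $p_n\times q_n\colon X_n\times_{F_n}Y_n\to X\times_FY$, $(x,y)\mapsto(p_n(x),q_n(y))$, is 1-Lipschitz up to $\eta_n$.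
   Context: An mm-space is a triple $(X,d_X,m_X)$ with $(X,d_X)$ complete separable metric space and $m_X$ a Borel probability measure. $\mathcal F^2$: continuous $F\colon[0,+\infty)^2\to[0,+\infty)$ such that $d_F((x,y),(x',y')):=F(d_X(x,x'),d_Y(y,y'))$ is a metric on $X\times Y$ for all metric spaces; $X\times_FY:=(X\times Y,d_F,m_X\otimes m_Y)$. A map $f\colon X\to Y$ from an mm-space to a metric space is 1-Lipschitz up to (an additive error) $\varepsilon\ge0$ if there is a Borel $X_0\subset X$ with $m_X(X_0)\ge1-\varepsilon$ and $d_Y(f(x),f(x'))\le d_X(x,x')+\varepsilon$ for all $x,x'\in X_0$. $\pi$ is the Prokhorov distance: $\pi(\mu,\nu)$ is the infimum of $\varepsilon>0$ with $\mu(U_\varepsilon(A))\ge\nu(A)-\varepsilon$ for all Borel $A$, where $U_\varepsilon(A)=\{x:d(x,A)<\varepsilon\}$. *)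

theory Defs
  imports "HOL-Probability.Probability"
begin

definition metric_borel_sets :: "'a set \<Rightarrow> ('a \<Rightarrow> 'a \<Rightarrow> real) \<Rightarrow> 'a set set" where
  "metric_borel_sets X d = sigma_sets X {U. openin (Metric_space.mtopology X d) U}"

definition mm_space :: "'a set \<Rightarrow> ('a \<Rightarrow> 'a \<Rightarrow> real) \<Rightarrow> 'a measure \<Rightarrow> bool" where
  "mm_space X d m \<longleftrightarrow> Metric_space X d \<and> Metric_space.mcomplete X d
     \<and> separable_space (Metric_space.mtopology X d)
     \<and> space m = X \<and> sets m = metric_borel_sets X d \<and> prob_space m"

definition prod_dist :: "(real \<Rightarrow> real \<Rightarrow> real) \<Rightarrow> ('a \<Rightarrow> 'a \<Rightarrow> real) \<Rightarrow> ('b \<Rightarrow> 'b \<Rightarrow> real)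
    \<Rightarrow> ('a \<times> 'b) \<Rightarrow> ('a \<times> 'b) \<Rightarrow> real" where
  "prod_dist F dX dY = (\<lambda>(x, y) (x', y'). F (dX x x') (dY y y'))"

text \<open>The class F^2. The metric condition quantifies over all metric spaces carried by
  subsets of nat (the metric axioms involve at most three points, so this is
  the same as quantifying over all metric spaces).\<close>
definition F2 :: "(real \<Rightarrow> real \<Rightarrow> real) \<Rightarrow> bool" where
  "F2 F \<longleftrightarrow> continuous_on ({0..} \<times> {0..}) (\<lambda>(s, t). F s t)
     \<and> (\<forall>s\<ge>0. \<forall>t\<ge>0. 0 \<le> F s t)
     \<and> (\<forall>(X::nat set) dX (Y::nat set) dY. Metric_space X dX \<longrightarrow> Metric_space Y dY
          \<longrightarrow> Metric_space (X \<times> Y) (prod_dist F dX dY))"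

definition lip1_up_to :: "('a \<Rightarrow> 'a \<Rightarrow> real) \<Rightarrow> 'a measure \<Rightarrow> ('b \<Rightarrow> 'b \<Rightarrow> real)
    \<Rightarrow> ('a \<Rightarrow> 'b) \<Rightarrow> real \<Rightarrow> bool" where
  "lip1_up_to dX m dY f eps \<longleftrightarrow> 0 \<le> eps \<and> (\<exists>X0 \<in> sets m. measure m X0 \<ge> 1 - eps \<and>
     (\<forall>x\<in>X0. \<forall>x'\<in>X0. dY (f x) (f x') \<le> dX x x' + eps))"

definition open_nbhd :: "'a set \<Rightarrow> ('a \<Rightarrow> 'a \<Rightarrow> real) \<Rightarrow> real \<Rightarrow> 'a set \<Rightarrow> 'a set" where
  "open_nbhd X d eps A = {x \<in> X. \<exists>a\<in>A. d x a < eps}"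

definition prokhorov :: "'a set \<Rightarrow> ('a \<Rightarrow> 'a \<Rightarrow> real) \<Rightarrow> 'a measure \<Rightarrow> 'a measure \<Rightarrow> real" where
  "prokhorov X d \<mu> \<nu> = Inf {eps. eps > 0 \<and>
     (\<forall>A \<in> metric_borel_sets X d. measure \<mu> (open_nbhd X d eps A) \<ge> measure \<nu> A - eps)}"

end

theory Submission imports Defs begin

text \<open>Every \<open>F \<in> \<F>\<^sup>2\<close> vanishes at the origin, is continuous and, by the triangle inequality for
  \<open>d\<^sub>F\<close> on collinear triples, subadditive. With these, the pointwise hypotheses on \<open>F\<^sub>n\<close> become
  uniform on bounded ranges: for large \<open>n\<close>, \<open>F s t \<le> F\<^sub>n a b + \<gamma>\<close> whenever \<open>s \<le> a + \<rho>\<close> and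
  \<open>t \<le> b + \<rho>\<close> (compare with a finite grid below \<open>(s, t)\<close>). By tightness of \<open>m\<^sub>X\<close> and the
  Prokhorov bound, the set where \<open>p\<^sub>n\<close> is almost 1-Lipschitz and lands near a large ball has
  measure close to \<open>1\<close>; the same holds for \<open>q\<^sub>n\<close>, so on the product of the two sets
  \<open>p\<^sub>n \<times> q\<^sub>n\<close> is 1-Lipschitz up to \<open>\<gamma>\<close>. A diagonal choice of \<open>\<gamma> = \<eta>\<^sub>n \<rightarrow> 0\<close> concludes.\<close>

lemma F2_nonneg: "F2 G \<Longrightarrow> 0 \<le> s \<Longrightarrow> 0 \<le> t \<Longrightarrow> 0 \<le> G s t"
  unfolding F2_def by blast

lemma F2_Metric_space:
  fixes X Y :: "nat set"
  assumes "F2 G" "Metric_space X dX" "Metric_space Y dY"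
  shows "Metric_space (X \<times> Y) (prod_dist G dX dY)"
  using assms unfolding F2_def by blast

lemma F2_zero: assumes "F2 G" shows "G 0 0 = 0"
proof -
  have "Metric_space {0::nat} (\<lambda>_ _. 0)" by unfold_locales auto
  from F2_Metric_space[OF assms this this] show ?thesis
    using Metric_space.zero[of _ _ "(0, 0)" "(0, 0)"] by (fastforce simp: prod_dist_def)
qed

lemma F2_tendsto:
  assumes "F2 G" "a \<longlonglongrightarrow> a0" "b \<longlonglongrightarrow> b0" "\<And>k. 0 \<le> a k" "\<And>k. 0 \<le> b k" "0 \<le> a0" "0 \<le> b0"
  shows "(\<lambda>k. G (a k) (b k)) \<longlonglongrightarrow> G a0 b0"
proof -
  have "continuous_on ({0..} \<times> {0..}) (\<lambda>(s, t). G s t)"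
    using assms(1) by (simp add: F2_def)
  from continuous_on_tendsto_compose[OF this tendsto_Pair[OF assms(2,3)]]
  show ?thesis using assms(4-7) by simp
qed

lemma F2_small_near_zero:
  assumes "F2 G" "c > 0"
  obtains d where "d > 0" "\<And>h k. 0 \<le> h \<Longrightarrow> 0 \<le> k \<Longrightarrow> h < d \<Longrightarrow> k < d \<Longrightarrow> G h k < c"
proof -
  have "continuous_on ({0..} \<times> {0..}) (\<lambda>(s, t). G s t)"
    using assms(1) by (simp add: F2_def)
  then obtain d where d: "d > 0"
    "\<And>z. z \<in> {0..} \<times> {0..} \<Longrightarrow> dist z (0, 0) < d \<Longrightarrow> dist (case_prod G z) (G 0 0) < c"
    unfolding continuous_on_iff using assms(2) by (metis SigmaI atLeast_iff case_prod_conv order_refl)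
  show ?thesis
  proof
    show "d / 2 > 0" using d(1) by simp
    fix h k :: real assume hk: "0 \<le> h" "0 \<le> k" "h < d / 2" "k < d / 2"
    have "dist (h, k) (0, 0) \<le> \<bar>h\<bar> + \<bar>k\<bar>"
      by (simp add: dist_Pair_Pair sqrt_sum_squares_le_sum_abs)
    with hk have "dist (G h k) (G 0 0) < c" using d(2)[of "(h, k)"] by simp
    then show "G h k < c"
      using F2_zero[OF assms(1)] F2_nonneg[OF assms(1) hk(1,2)] by (simp add: dist_real_def)
  qed
qed

lemma Metric_space_real_embedding:
  "inj_on f S \<Longrightarrow> Metric_space S (\<lambda>i j. \<bar>f i - f j\<bar> :: real)"
  by unfold_locales (auto simp: inj_on_def)

text \<open>Put the collinear points \<open>0, u, u + u'\<close> and \<open>0, v, v + v'\<close> into the two factors: the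
  diagonal pairs form a triangle in the product with sides \<open>G u v\<close>, \<open>G u' v'\<close> and
  \<open>G (u + u') (v + v')\<close>.\<close>
lemma F2_subadditive_pos:
  assumes "F2 G" "0 < u" "0 < u'" "0 < v" "0 < v'"
  shows "G (u + u') (v + v') \<le> G u v + G u' v'"
proof -
  define c :: "real \<Rightarrow> real \<Rightarrow> nat \<Rightarrow> real"
    where "c = (\<lambda>w w' i. if i = 0 then 0 else if i = 1 then w else w + w')"
  have "inj_on (c u u') {0, 1, 2}" "inj_on (c v v') {0, 1, 2}"
    using assms by (simp_all add: c_def)
  from F2_Metric_space[OF assms(1) this[THEN Metric_space_real_embedding]]
  have "Metric_space ({0, 1, 2} \<times> {0, 1, 2})
      (prod_dist G (\<lambda>i j. \<bar>c u u' i - c u u' j\<bar>) (\<lambda>i j. \<bar>c v v' i - c v v' j\<bar>))" .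
  from Metric_space.triangle[OF this, of "(0, 0)" "(1, 1)" "(2, 2)"] show ?thesis
    using assms unfolding prod_dist_def c_def by simp
qed

lemma F2_subadditive:
  assumes "F2 G" "0 \<le> a" "0 \<le> a'" "0 \<le> b" "0 \<le> b'"
  shows "G (a + a') (b + b') \<le> G a b + G a' b'"
proof -
  define e :: "nat \<Rightarrow> real" where "e k = 1 / (real k + 1)" for k
  have e_pos: "e k > 0" for k by (simp add: e_def)
  have e_lim: "e \<longlonglongrightarrow> 0"
    unfolding e_def using LIMSEQ_inverse_real_of_nat by (simp add: inverse_eq_divide add.commute)
  have shift: "(\<lambda>k. x + c * e k) \<longlonglongrightarrow> x" for x c :: real
    using tendsto_add[OF tendsto_const tendsto_mult[OF tendsto_const e_lim]] by simp
  have lim: "(\<lambda>k. G (x + c * e k) (y + c * e k)) \<longlonglongrightarrow> G x y" if "0 \<le> x" "0 \<le> y" "0 \<le> c" for x y c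
    using that e_pos by (intro F2_tendsto[OF assms(1) shift shift]) (simp_all add: less_imp_le)
  have le: "G (a + a' + 2 * e k) (b + b' + 2 * e k)
      \<le> G (a + 1 * e k) (b + 1 * e k) + G (a' + 1 * e k) (b' + 1 * e k)" for k
    using F2_subadditive_pos[OF assms(1), of "a + e k" "a' + e k" "b + e k" "b' + e k"] assms e_pos[of k]
    by (simp add: algebra_simps)
  have "(\<lambda>k. G (a + a' + 2 * e k) (b + b' + 2 * e k)) \<longlonglongrightarrow> G (a + a') (b + b')"
    using assms by (intro lim) auto
  moreover have "(\<lambda>k. G (a + 1 * e k) (b + 1 * e k) + G (a' + 1 * e k) (b' + 1 * e k))
      \<longlonglongrightarrow> G a b + G a' b'"
    using assms by (intro tendsto_add lim) auto
  ultimately show ?thesis by (rule LIMSEQ_le) (use le in auto)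
qed

lemma F2_limit_le_upper_quadrant:
  assumes F2n: "\<And>n. F2 (Fn n)"
    and conv: "(\<lambda>n. Fn n s t) \<longlonglongrightarrow> F s t"
    and mono: "(\<lambda>n. Fn n s t - Inf {Fn n s' t' | s' t'. s \<le> s' \<and> t \<le> t'}) \<longlonglongrightarrow> 0"
    and "0 \<le> s" "0 \<le> t" "c > 0"
  shows "eventually (\<lambda>n. \<forall>a b. s \<le> a \<longrightarrow> t \<le> b \<longrightarrow> F s t < Fn n a b + c) sequentially"
proof -
  have Inf_le: "Inf {Fn n s' t' | s' t'. s \<le> s' \<and> t \<le> t'} \<le> Fn n a b" if "s \<le> a" "t \<le> b" for n a b
  proof (rule cInf_lower)
    show "Fn n a b \<in> {Fn n s' t' | s' t'. s \<le> s' \<and> t \<le> t'}" using that by blast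
    show "bdd_below {Fn n s' t' | s' t'. s \<le> s' \<and> t \<le> t'}"
      using F2_nonneg[OF F2n] assms(4,5) by (force intro: bdd_belowI[of _ 0])
  qed
  have "eventually (\<lambda>n. dist (Fn n s t) (F s t) < c / 2) sequentially"
    by (rule tendstoD[OF conv]) (use \<open>c > 0\<close> in simp)
  then have "eventually (\<lambda>n. F s t < Fn n s t + c / 2) sequentially"
    by eventually_elim (unfold dist_real_def, arith)
  moreover have "eventually (\<lambda>n. dist (Fn n s t - Inf {Fn n s' t' | s' t'. s \<le> s' \<and> t \<le> t'}) 0 < c / 2)
      sequentially"
    by (rule tendstoD[OF mono]) (use \<open>c > 0\<close> in simp)
  then have "eventually (\<lambda>n. Fn n s t - Inf {Fn n s' t' | s' t'. s \<le> s' \<and> t \<le> t'} < c / 2) sequentially"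
    by eventually_elim (unfold dist_real_def, arith)
  ultimately show ?thesis
  proof eventually_elim
    case (elim n)
    then show ?case using Inf_le[of _ _ n] by fastforce
  qed
qed

lemma exists_grid_point_below:
  assumes "(\<rho>::real) > 0" "0 \<le> m" "m \<le> D"
  shows "\<exists>i \<le> nat \<lceil>D / \<rho>\<rceil>. real i * \<rho> \<le> m \<and> m < real i * \<rho> + \<rho>"
proof (intro exI conjI)
  let ?i = "nat \<lfloor>m / \<rho>\<rfloor>"
  have i: "real ?i = of_int \<lfloor>m / \<rho>\<rfloor>" using assms by simp
  have "of_int \<lfloor>m / \<rho>\<rfloor> \<le> m / \<rho>" "m / \<rho> < of_int \<lfloor>m / \<rho>\<rfloor> + 1"
    by linarith+
  then show "real ?i * \<rho> \<le> m" "m < real ?i * \<rho> + \<rho>"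
    using assms(1) unfolding i by (simp_all add: le_divide_eq divide_less_eq algebra_simps)
  have "m / \<rho> \<le> D / \<rho>" using assms by (simp add: divide_right_mono)
  then have "\<lfloor>m / \<rho>\<rfloor> \<le> \<lceil>D / \<rho>\<rceil>" by (meson floor_le_ceiling floor_mono order_trans)
  then show "?i \<le> nat \<lceil>D / \<rho>\<rceil>" by (simp add: nat_mono)
qed

lemma exists_grid_point_near:
  assumes "(\<rho>::real) > 0" "0 \<le> s" "s \<le> D" "0 \<le> a" "s \<le> a + \<rho>"
  obtains i where "i \<le> nat \<lceil>D / \<rho>\<rceil>" "real i * \<rho> \<le> s" "real i * \<rho> \<le> a" "s - real i * \<rho> < 2 * \<rho>"
proof -
  have "0 \<le> max (s - \<rho>) 0" "max (s - \<rho>) 0 \<le> D" using assms by auto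
  from exists_grid_point_below[OF assms(1) this] obtain i where
    "i \<le> nat \<lceil>D / \<rho>\<rceil>" "real i * \<rho> \<le> max (s - \<rho>) 0" "max (s - \<rho>) 0 < real i * \<rho> + \<rho>"
    by blast
  with assms show ?thesis by (intro that) (auto simp: max_def split: if_splits)
qed

text \<open>Grid points of mesh \<open>\<rho>\<close> below \<open>(s, t)\<close> are close enough for the continuity of \<open>F\<close> at the
  origin and subadditivity to take over; on the finite grid the pointwise hypotheses are uniform.\<close>
lemma F2_limit_uniform_lower_bound:
  assumes F2F: "F2 F" and F2n: "\<And>n. F2 (Fn n)"
    and conv: "\<And>s t. 0 \<le> s \<Longrightarrow> 0 \<le> t \<Longrightarrow> (\<lambda>n. Fn n s t) \<longlonglongrightarrow> F s t"
    and mono: "\<And>s t. 0 \<le> s \<Longrightarrow> 0 \<le> t \<Longrightarrow>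
        (\<lambda>n. Fn n s t - Inf {Fn n s' t' | s' t'. s \<le> s' \<and> t \<le> t'}) \<longlonglongrightarrow> 0"
    and "\<gamma> > 0"
  obtains \<rho> where "\<rho> > 0" "eventually (\<lambda>n. \<forall>s t a b. 0 \<le> s \<longrightarrow> s \<le> D \<longrightarrow> 0 \<le> t \<longrightarrow> t \<le> D
      \<longrightarrow> 0 \<le> a \<longrightarrow> 0 \<le> b \<longrightarrow> s \<le> a + \<rho> \<longrightarrow> t \<le> b + \<rho> \<longrightarrow> F s t \<le> Fn n a b + \<gamma>) sequentially"
proof -
  obtain d where d: "d > 0" "\<And>h k. 0 \<le> h \<Longrightarrow> 0 \<le> k \<Longrightarrow> h < d \<Longrightarrow> k < d \<Longrightarrow> F h k < \<gamma> / 2"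
    using F2_small_near_zero[OF F2F, of "\<gamma> / 2"] \<open>\<gamma> > 0\<close> by auto
  define \<rho> where "\<rho> = d / 2"
  have "\<rho> > 0" using d(1) by (simp add: \<rho>_def)
  define N where "N = nat \<lceil>D / \<rho>\<rceil>"
  define grid where "grid = (\<lambda>(i, j). (real i * \<rho>, real j * \<rho>)) ` ({..N} \<times> {..N})"
  have "eventually (\<lambda>n. \<forall>g\<in>grid. \<forall>a b. fst g \<le> a \<longrightarrow> snd g \<le> b
      \<longrightarrow> F (fst g) (snd g) < Fn n a b + \<gamma> / 2) sequentially"
    using \<open>\<rho> > 0\<close> \<open>\<gamma> > 0\<close>
    by (intro eventually_ball_finite ballI F2_limit_le_upper_quadrant F2n conv mono)
      (auto simp: grid_def)
  then have "eventually (\<lambda>n. \<forall>s t a b. 0 \<le> s \<longrightarrow> s \<le> D \<longrightarrow> 0 \<le> t \<longrightarrow> t \<le> D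
      \<longrightarrow> 0 \<le> a \<longrightarrow> 0 \<le> b \<longrightarrow> s \<le> a + \<rho> \<longrightarrow> t \<le> b + \<rho> \<longrightarrow> F s t \<le> Fn n a b + \<gamma>) sequentially"
  proof (rule eventually_mono, intro allI impI)
    fix n s t a b
    assume grid_bound: "\<forall>g\<in>grid. \<forall>a b. fst g \<le> a \<longrightarrow> snd g \<le> b
        \<longrightarrow> F (fst g) (snd g) < Fn n a b + \<gamma> / 2"
      and st: "0 \<le> s" "s \<le> D" "0 \<le> t" "t \<le> D" "0 \<le> a" "0 \<le> b" "s \<le> a + \<rho>" "t \<le> b + \<rho>"
    obtain i j where i: "i \<le> N" "real i * \<rho> \<le> s" "real i * \<rho> \<le> a" "s - real i * \<rho> < d"
      and j: "j \<le> N" "real j * \<rho> \<le> t" "real j * \<rho> \<le> b" "t - real j * \<rho> < d"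
      using exists_grid_point_near[OF \<open>\<rho> > 0\<close>] st unfolding N_def \<rho>_def by (metis mult_2 field_sum_of_halves)
    define g1 g2 where "g1 = real i * \<rho>" and "g2 = real j * \<rho>"
    have g: "0 \<le> g1" "g1 \<le> s" "g1 \<le> a" "s - g1 < d" "0 \<le> g2" "g2 \<le> t" "g2 \<le> b" "t - g2 < d"
      using i j \<open>\<rho> > 0\<close> unfolding g1_def g2_def by auto
    have "F s t \<le> F g1 g2 + F (s - g1) (t - g2)"
      using F2_subadditive[OF F2F, of g1 "s - g1" g2 "t - g2"] g by simp
    moreover have "F g1 g2 < Fn n a b + \<gamma> / 2"
      using grid_bound i(1) j(1) g unfolding grid_def g1_def g2_def by fastforce
    moreover have "F (s - g1) (t - g2) < \<gamma> / 2"
      using d(2) g by simp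
    ultimately show "F s t \<le> Fn n a b + \<gamma>" by linarith
  qed
  with \<open>\<rho> > 0\<close> show ?thesis by (rule that)
qed

lemma open_nbhd_in_metric_borel_sets:
  assumes "Metric_space X d" "A \<subseteq> X"
  shows "open_nbhd X d r A \<in> metric_borel_sets X d"
proof -
  have "open_nbhd X d r A = (\<Union>a\<in>A. Metric_space.mball X d a r)"
    using assms Metric_space.commute[OF assms(1)]
    by (auto simp: open_nbhd_def Metric_space.mball_def[OF assms(1)])
  then have "openin (Metric_space.mtopology X d) (open_nbhd X d r A)"
    using Metric_space.openin_mball[OF assms(1)] by auto
  then show ?thesis unfolding metric_borel_sets_def by (intro sigma_sets.Basic) simp
qed

lemma mball_in_metric_borel_sets:
  "Metric_space X d \<Longrightarrow> Metric_space.mball X d x r \<in> metric_borel_sets X d"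
  unfolding metric_borel_sets_def by (intro sigma_sets.Basic) (simp add: Metric_space.openin_mball)

lemma mm_space_measure_mball_tendsto:
  assumes "mm_space X d m" "x0 \<in> X"
  shows "(\<lambda>k. measure m (Metric_space.mball X d x0 (real k))) \<longlonglongrightarrow> 1"
proof -
  have ms: "Metric_space X d" and "space m = X" "sets m = metric_borel_sets X d" "prob_space m"
    using assms(1) by (auto simp: mm_space_def)
  interpret prob_space m by fact
  let ?B = "\<lambda>k::nat. Metric_space.mball X d x0 (real k)"
  have "(\<Union>k. ?B k) = X"
  proof (intro equalityI subsetI)
    fix y assume "y \<in> X"
    moreover obtain k :: nat where "d x0 y < real k" using reals_Archimedean2 by blast
    ultimately show "y \<in> (\<Union>k. ?B k)" using assms(2) by (auto simp: Metric_space.mball_def[OF ms])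
  qed (auto simp: Metric_space.mball_def[OF ms])
  moreover have "(\<lambda>k. measure m (?B k)) \<longlonglongrightarrow> measure m (\<Union>k. ?B k)"
    using mball_in_metric_borel_sets[OF ms] \<open>sets m = _\<close>
    by (intro finite_Lim_measure_incseq) (auto simp: incseq_def Metric_space.mball_def[OF ms])
  ultimately show ?thesis using \<open>space m = X\<close> prob_space by simp
qed

lemma prokhorov_le_imp_measure_open_nbhd:
  assumes "prob_space m" "prokhorov X d \<mu> m \<le> e" "\<theta> > 0" "A \<in> metric_borel_sets X d"
  obtains r where "0 < r" "r < e + \<theta>" "measure m A - r \<le> measure \<mu> (open_nbhd X d r A)"
proof -
  let ?S = "{r. r > 0 \<and> (\<forall>A \<in> metric_borel_sets X d. measure \<mu> (open_nbhd X d r A) \<ge> measure m A - r)}"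
  have "measure m B - 2 \<le> measure \<mu> (open_nbhd X d 2 B)" for B
    using prob_space.prob_le_1[OF assms(1), of B] measure_nonneg[of \<mu> "open_nbhd X d 2 B"] by linarith
  then have "(2::real) \<in> ?S" by simp
  then have "?S \<noteq> {}" by (metis empty_iff)
  moreover have "Inf ?S < e + \<theta>" using assms(2,3) unfolding prokhorov_def by simp
  ultimately obtain r where r: "r \<in> ?S" "r < e + \<theta>" using cInf_lessD by meson
  from r(1) have "0 < r" "measure m A - r \<le> measure \<mu> (open_nbhd X d r A)"
    using assms(4) by simp_all
  with r(2) show ?thesis by (blast intro: that)
qed

lemma open_nbhd_mball_dist:
  assumes "Metric_space X d" "x0 \<in> X" "x \<in> open_nbhd X d r (Metric_space.mball X d x0 R)"
  shows "d x0 x < R + r"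
proof -
  obtain a where a: "x \<in> X" "a \<in> X" "d x0 a < R" "d x a < r"
    using assms(3) by (auto simp: open_nbhd_def Metric_space.mball_def[OF assms(1)])
  have "d x0 x \<le> d x0 a + d a x" by (rule Metric_space.triangle[OF assms(1) assms(2) a(2,1)])
  with a Metric_space.commute[OF assms(1), of a x] show ?thesis by linarith
qed

lemma prob_space_measure_Int_ge:
  assumes "prob_space M" "A \<in> sets M" "B \<in> sets M"
  shows "measure M A + measure M B - 1 \<le> measure M (A \<inter> B)"
proof -
  interpret prob_space M by fact
  have "measure M (A \<union> B) = measure M A + measure M B - measure M (A \<inter> B)"
    using assms by (intro measure_Un3) (auto simp: fmeasurable_eq_sets)
  moreover have "measure M (A \<union> B) \<le> 1" by simp
  ultimately show ?thesis by linarith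
qed

lemma measure_pair_measure_Times_ge:
  assumes "prob_space M" "prob_space N" "A \<in> sets M" "B \<in> sets N"
  shows "measure M A + measure N B - 1 \<le> measure (M \<Otimes>\<^sub>M N) (A \<times> B)"
proof -
  interpret N: sigma_finite_measure N using prob_space_imp_sigma_finite[OF assms(2)] .
  have "emeasure (M \<Otimes>\<^sub>M N) (A \<times> B) = emeasure M A * emeasure N B"
    using assms by (intro N.emeasure_pair_measure_Times)
  then have "measure (M \<Otimes>\<^sub>M N) (A \<times> B) = measure M A * measure N B"
    by (simp add: measure_def enn2real_mult)
  moreover have "0 \<le> (1 - measure M A) * (1 - measure N B)"
    using prob_space.prob_le_1[OF assms(1)] prob_space.prob_le_1[OF assms(2)] by simp
  ultimately show ?thesis by (simp add: algebra_simps)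
qed

lemma lip1_up_to_on_bounded_subset:
  assumes mm: "mm_space X d m" and M: "prob_space M" and f: "f \<in> measurable M m"
    and lip: "lip1_up_to dM M d f e" and prok: "prokhorov X d (distr M m f) m \<le> e"
    and x0: "x0 \<in> X" and ball: "1 - \<theta> \<le> measure m (Metric_space.mball X d x0 R)" and "\<theta> > 0"
  obtains A where "A \<in> sets M" "1 - 2 * e - 2 * \<theta> \<le> measure M A"
    "\<And>x x'. x \<in> A \<Longrightarrow> x' \<in> A \<Longrightarrow> d (f x) (f x') \<le> dM x x' + e"
    "\<And>x x'. x \<in> A \<Longrightarrow> x' \<in> A \<Longrightarrow> d (f x) (f x') \<le> 2 * (R + e + \<theta>)"
proof -
  have ms: "Metric_space X d" and sets: "sets m = metric_borel_sets X d" and "prob_space m"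
    using mm by (auto simp: mm_space_def)
  from lip obtain X0 where X0: "X0 \<in> sets M" "1 - e \<le> measure M X0"
    "\<And>x x'. x \<in> X0 \<Longrightarrow> x' \<in> X0 \<Longrightarrow> d (f x) (f x') \<le> dM x x' + e"
    unfolding lip1_up_to_def by blast
  let ?B = "Metric_space.mball X d x0 R"
  obtain r where r: "0 < r" "r < e + \<theta>" "measure m ?B - r \<le> measure (distr M m f) (open_nbhd X d r ?B)"
    using prokhorov_le_imp_measure_open_nbhd[OF \<open>prob_space m\<close> prok \<open>\<theta> > 0\<close>
        mball_in_metric_borel_sets[OF ms]] .
  have U: "open_nbhd X d r ?B \<in> sets m"
    unfolding sets by (rule open_nbhd_in_metric_borel_sets[OF ms]) (auto simp: Metric_space.mball_def[OF ms])
  define P where "P = f -` open_nbhd X d r ?B \<inter> space M"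
  have P: "P \<in> sets M" unfolding P_def by (rule measurable_sets[OF f U])
  have "1 - \<theta> - r \<le> measure M P"
    using r(3) ball measure_distr[OF f U] unfolding P_def by linarith
  then have measure_A: "1 - 2 * e - 2 * \<theta> \<le> measure M (X0 \<inter> P)"
    using prob_space_measure_Int_ge[OF M X0(1) P] X0(2) r(2) by linarith
  have image_near_x0: "f x \<in> X \<and> d x0 (f x) < R + r" if "x \<in> P" for x
    using that open_nbhd_mball_dist[OF ms x0] by (auto simp: P_def open_nbhd_def)
  show ?thesis
  proof (rule that[OF _ measure_A])
    show "X0 \<inter> P \<in> sets M" using X0(1) P by simp
    fix x x' assume x: "x \<in> X0 \<inter> P" and x': "x' \<in> X0 \<inter> P"
    then show "d (f x) (f x') \<le> dM x x' + e" using X0(3) by simp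
    have "d (f x) (f x') \<le> d x0 (f x) + d x0 (f x')"
      using Metric_space.triangle[OF ms, of "f x" x0 "f x'"] Metric_space.commute[OF ms, of x0]
        image_near_x0 x x' x0 by simp
    then show "d (f x) (f x') \<le> 2 * (R + e + \<theta>)"
      using image_near_x0[of x] image_near_x0[of x'] x x' r(2) by auto
  qed
qed

lemma lip1_up_to_prod_map:
  assumes "prob_space M1" "prob_space M2" "A1 \<in> sets M1" "A2 \<in> sets M2"
    and "2 - \<gamma> \<le> measure M1 A1 + measure M2 A2" "0 \<le> \<gamma>"
    and "\<And>x x' y y'. x \<in> A1 \<Longrightarrow> x' \<in> A1 \<Longrightarrow> y \<in> A2 \<Longrightarrow> y' \<in> A2 \<Longrightarrow>
      G (d1 (f x) (f x')) (d2 (g y) (g y')) \<le> H (e1 x x') (e2 y y') + \<gamma>"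
  shows "lip1_up_to (prod_dist H e1 e2) (M1 \<Otimes>\<^sub>M M2) (prod_dist G d1 d2) (\<lambda>(x, y). (f x, g y)) \<gamma>"
  unfolding lip1_up_to_def
proof (intro conjI bexI[of _ "A1 \<times> A2"] ballI)
  show "A1 \<times> A2 \<in> sets (M1 \<Otimes>\<^sub>M M2)" using assms(3,4) by simp
  show "1 - \<gamma> \<le> measure (M1 \<Otimes>\<^sub>M M2) (A1 \<times> A2)"
    using measure_pair_measure_Times_ge[OF assms(1-4)] assms(5) by linarith
  fix z z' assume "z \<in> A1 \<times> A2" "z' \<in> A1 \<times> A2"
  then show "prod_dist G d1 d2 ((\<lambda>(x, y). (f x, g y)) z) ((\<lambda>(x, y). (f x, g y)) z')
      \<le> prod_dist H e1 e2 z z' + \<gamma>"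
    using assms(7) by (auto simp: prod_dist_def)
qed (rule assms(6))

text \<open>Take \<open>\<eta> n = 1 / (k + 1)\<close> for the largest \<open>k \<le> n\<close> such that \<open>P n (1 / (k + 1))\<close>.\<close>
lemma exists_tendsto_zero_witness:
  fixes P :: "nat \<Rightarrow> real \<Rightarrow> bool"
  assumes "\<And>n. P n 1" and "\<And>\<gamma>. \<gamma> > 0 \<Longrightarrow> eventually (\<lambda>n. P n \<gamma>) sequentially"
  shows "\<exists>\<eta>. \<eta> \<longlonglongrightarrow> 0 \<and> (\<forall>n. P n (\<eta> n))"
proof -
  define K where "K n = (GREATEST k. k \<le> n \<and> P n (1 / real (Suc k)))" for n
  have K: "K n \<le> n \<and> P n (1 / real (Suc (K n)))" for n
    unfolding K_def by (rule GreatestI_nat[of _ 0 n]) (use assms(1) in auto)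
  have K_ge: "m \<le> K n" if "m \<le> n" "P n (1 / real (Suc m))" for m n
    unfolding K_def by (rule Greatest_le_nat[of _ m n]) (use that in auto)
  define \<eta> where "\<eta> n = 1 / real (Suc (K n))" for n
  have eventually_le: "eventually (\<lambda>n. \<eta> n \<le> 1 / real (Suc m)) sequentially" for m
  proof -
    obtain N where N: "\<And>n. n \<ge> N \<Longrightarrow> P n (1 / real (Suc m))"
      using assms(2)[of "1 / real (Suc m)"] unfolding eventually_sequentially by auto
    have "\<eta> n \<le> 1 / real (Suc m)" if "max N m \<le> n" for n
      using K_ge[of m n] N[of n] that unfolding \<eta>_def by (simp add: frac_le)
    then show ?thesis unfolding eventually_sequentially by blast
  qed
  have "\<eta> \<longlonglongrightarrow> 0"
  proof (rule order_tendstoI)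
    fix a :: real assume "a < 0"
    then show "eventually (\<lambda>n. a < \<eta> n) sequentially" by (simp add: \<eta>_def less_le_trans[of a 0])
  next
    fix a :: real assume "0 < a"
    then obtain m where "inverse (real (Suc m)) < a" using reals_Archimedean by blast
    with eventually_le[of m] show "eventually (\<lambda>n. \<eta> n < a) sequentially"
      by (auto elim: eventually_mono simp: inverse_eq_divide)
  qed
  with K show ?thesis unfolding \<eta>_def by blast
qed

lemma lip1_up_to_prod_map_of_approximations:
  assumes mm1: "mm_space X1 d1 M1" and mm2: "mm_space X2 d2 M2"
    and mmX: "mm_space X dX mX" and mmY: "mm_space Y dY mY"
    and f: "f \<in> measurable M1 mX" "lip1_up_to d1 M1 dX f e" "prokhorov X dX (distr M1 mX f) mX \<le> e"
    and g: "g \<in> measurable M2 mY" "lip1_up_to d2 M2 dY g e'" "prokhorov Y dY (distr M2 mY g) mY \<le> e'"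
    and x0: "x0 \<in> X" "1 - \<theta> \<le> measure mX (Metric_space.mball X dX x0 R)"
    and y0: "y0 \<in> Y" "1 - \<theta> \<le> measure mY (Metric_space.mball Y dY y0 R)"
    and "\<theta> > 0" and D: "2 * (R + e + \<theta>) \<le> D" "2 * (R + e' + \<theta>) \<le> D"
    and \<gamma>: "2 * e + 2 * e' + 4 * \<theta> \<le> \<gamma>" and \<rho>: "e \<le> \<rho>" "e' \<le> \<rho>"
    and GH: "\<And>s t a b. 0 \<le> s \<Longrightarrow> s \<le> D \<Longrightarrow> 0 \<le> t \<Longrightarrow> t \<le> D \<Longrightarrow> 0 \<le> a \<Longrightarrow> 0 \<le> b \<Longrightarrow>
      s \<le> a + \<rho> \<Longrightarrow> t \<le> b + \<rho> \<Longrightarrow> G s t \<le> H a b + \<gamma>"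
  shows "lip1_up_to (prod_dist H d1 d2) (M1 \<Otimes>\<^sub>M M2) (prod_dist G dX dY) (\<lambda>(x, y). (f x, g y)) \<gamma>"
proof -
  have "prob_space M1" "prob_space M2" "Metric_space X1 d1" "Metric_space X2 d2"
    "Metric_space X dX" "Metric_space Y dY"
    using mm1 mm2 mmX mmY by (auto simp: mm_space_def)
  note nonneg = this(3-6)[THEN Metric_space.nonneg]
  obtain A1 where A1: "A1 \<in> sets M1" "1 - 2 * e - 2 * \<theta> \<le> measure M1 A1"
    "\<And>x x'. x \<in> A1 \<Longrightarrow> x' \<in> A1 \<Longrightarrow> dX (f x) (f x') \<le> d1 x x' + e"
    "\<And>x x'. x \<in> A1 \<Longrightarrow> x' \<in> A1 \<Longrightarrow> dX (f x) (f x') \<le> 2 * (R + e + \<theta>)"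
    by (rule lip1_up_to_on_bounded_subset[OF mmX \<open>prob_space M1\<close> f x0 \<open>\<theta> > 0\<close>]) blast
  obtain A2 where A2: "A2 \<in> sets M2" "1 - 2 * e' - 2 * \<theta> \<le> measure M2 A2"
    "\<And>y y'. y \<in> A2 \<Longrightarrow> y' \<in> A2 \<Longrightarrow> dY (g y) (g y') \<le> d2 y y' + e'"
    "\<And>y y'. y \<in> A2 \<Longrightarrow> y' \<in> A2 \<Longrightarrow> dY (g y) (g y') \<le> 2 * (R + e' + \<theta>)"
    by (rule lip1_up_to_on_bounded_subset[OF mmY \<open>prob_space M2\<close> g y0 \<open>\<theta> > 0\<close>]) blast
  have "0 \<le> e" "0 \<le> e'" using f(2) g(2) by (simp_all add: lip1_up_to_def)
  show ?thesis
  proof (rule lip1_up_to_prod_map[OF \<open>prob_space M1\<close> \<open>prob_space M2\<close> A1(1) A2(1)])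
    show "2 - \<gamma> \<le> measure M1 A1 + measure M2 A2" "0 \<le> \<gamma>"
      using A1(2) A2(2) \<open>0 \<le> e\<close> \<open>0 \<le> e'\<close> \<open>\<theta> > 0\<close> \<gamma> by linarith+
    fix x x' y y' assume xy: "x \<in> A1" "x' \<in> A1" "y \<in> A2" "y' \<in> A2"
    have "dX (f x) (f x') \<le> D" "dY (g y) (g y') \<le> D"
      "dX (f x) (f x') \<le> d1 x x' + \<rho>" "dY (g y) (g y') \<le> d2 y y' + \<rho>"
      using A1(3,4)[OF xy(1,2)] A2(3,4)[OF xy(3,4)] D \<rho> by linarith+
    then show "G (dX (f x) (f x')) (dY (g y) (g y')) \<le> H (d1 x x') (d2 y y') + \<gamma>"
      by (intro GH nonneg)
  qed
qed

theorem mainTheorem18: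
  fixes Xn :: "nat \<Rightarrow> 'a set" and dXn :: "nat \<Rightarrow> 'a \<Rightarrow> 'a \<Rightarrow> real" and mXn :: "nat \<Rightarrow> 'a measure"
    and Yn :: "nat \<Rightarrow> 'b set" and dYn :: "nat \<Rightarrow> 'b \<Rightarrow> 'b \<Rightarrow> real" and mYn :: "nat \<Rightarrow> 'b measure"
    and X :: "'c set" and dX :: "'c \<Rightarrow> 'c \<Rightarrow> real" and mX :: "'c measure"
    and Y :: "'d set" and dY :: "'d \<Rightarrow> 'd \<Rightarrow> real" and mY :: "'d measure"
    and Fn :: "nat \<Rightarrow> real \<Rightarrow> real \<Rightarrow> real" and F :: "real \<Rightarrow> real \<Rightarrow> real"
    and p :: "nat \<Rightarrow> 'a \<Rightarrow> 'c" and q :: "nat \<Rightarrow> 'b \<Rightarrow> 'd"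
    and \<epsilon> \<delta> :: "nat \<Rightarrow> real"
  assumes mmXn: "\<And>n. mm_space (Xn n) (dXn n) (mXn n)"
    and mmYn: "\<And>n. mm_space (Yn n) (dYn n) (mYn n)"
    and mmX: "mm_space X dX mX" and mmY: "mm_space Y dY mY"
    and F2n: "\<And>n. F2 (Fn n)" and F2F: "F2 F"
    and Fn_conv: "\<And>s t. 0 \<le> s \<Longrightarrow> 0 \<le> t \<Longrightarrow> (\<lambda>n. Fn n s t) \<longlonglongrightarrow> F s t"
    and Fn_mono: "\<And>s t. 0 \<le> s \<Longrightarrow> 0 \<le> t \<Longrightarrow>
        (\<lambda>n. Fn n s t - Inf {Fn n s' t' | s' t'. s \<le> s' \<and> t \<le> t'}) \<longlonglongrightarrow> 0"
    and p_meas: "\<And>n. p n \<in> measurable (mXn n) mX"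
    and q_meas: "\<And>n. q n \<in> measurable (mYn n) mY"
    and p_lip: "\<And>n. lip1_up_to (dXn n) (mXn n) dX (p n) (\<epsilon> n)"
    and q_lip: "\<And>n. lip1_up_to (dYn n) (mYn n) dY (q n) (\<delta> n)"
    and p_prok: "\<And>n. prokhorov X dX (distr (mXn n) mX (p n)) mX \<le> \<epsilon> n"
    and q_prok: "\<And>n. prokhorov Y dY (distr (mYn n) mY (q n)) mY \<le> \<delta> n"
    and \<epsilon>_lim: "\<epsilon> \<longlonglongrightarrow> 0" and \<delta>_lim: "\<delta> \<longlonglongrightarrow> 0"
  shows "\<exists>\<eta> :: nat \<Rightarrow> real. \<eta> \<longlonglongrightarrow> 0 \<and>
    (\<forall>n. lip1_up_to (prod_dist (Fn n) (dXn n) (dYn n)) (mXn n \<Otimes>\<^sub>M mYn n)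
          (prod_dist F dX dY) (\<lambda>(x, y). (p n x, q n y)) (\<eta> n))"
proof (rule exists_tendsto_zero_witness)
  show "lip1_up_to (prod_dist (Fn n) (dXn n) (dYn n)) (mXn n \<Otimes>\<^sub>M mYn n)
      (prod_dist F dX dY) (\<lambda>(x, y). (p n x, q n y)) 1" for n
    unfolding lip1_up_to_def by (intro conjI bexI[of _ "{}"]) auto
  fix \<gamma> :: real assume "\<gamma> > 0"
  obtain x0 y0 where "x0 \<in> X" "y0 \<in> Y"
    using prob_space.not_empty[of mX] prob_space.not_empty[of mY] mmX mmY unfolding mm_space_def by auto
  have "eventually (\<lambda>k. 1 - \<gamma> / 8 < measure mX (Metric_space.mball X dX x0 (real k))
      \<and> 1 - \<gamma> / 8 < measure mY (Metric_space.mball Y dY y0 (real k))) sequentially"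
    using \<open>\<gamma> > 0\<close> by (intro eventually_conj order_tendstoD(1)[OF mm_space_measure_mball_tendsto]
        mmX mmY \<open>x0 \<in> X\<close> \<open>y0 \<in> Y\<close>) simp_all
  then obtain k :: nat where R: "1 - \<gamma> / 8 < measure mX (Metric_space.mball X dX x0 (real k))"
    "1 - \<gamma> / 8 < measure mY (Metric_space.mball Y dY y0 (real k))"
    by (auto simp: eventually_sequentially)
  define D where "D = 2 * (real k + 1 + \<gamma> / 8)"
  obtain \<rho> where "\<rho> > 0" and FnF: "eventually (\<lambda>n. \<forall>s t a b. 0 \<le> s \<longrightarrow> s \<le> D \<longrightarrow> 0 \<le> t \<longrightarrow> t \<le> D
      \<longrightarrow> 0 \<le> a \<longrightarrow> 0 \<le> b \<longrightarrow> s \<le> a + \<rho> \<longrightarrow> t \<le> b + \<rho> \<longrightarrow> F s t \<le> Fn n a b + \<gamma>) sequentially"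
    by (rule F2_limit_uniform_lower_bound[OF F2F F2n Fn_conv Fn_mono \<open>\<gamma> > 0\<close>])
  have "eventually (\<lambda>n. \<epsilon> n < min \<rho> (min (\<gamma> / 8) 1) \<and> \<delta> n < min \<rho> (min (\<gamma> / 8) 1)) sequentially"
    using \<open>\<gamma> > 0\<close> \<open>\<rho> > 0\<close>
    by (intro eventually_conj order_tendstoD(2)[OF \<epsilon>_lim] order_tendstoD(2)[OF \<delta>_lim]) auto
  with FnF show "eventually (\<lambda>n. lip1_up_to (prod_dist (Fn n) (dXn n) (dYn n)) (mXn n \<Otimes>\<^sub>M mYn n)
      (prod_dist F dX dY) (\<lambda>(x, y). (p n x, q n y)) \<gamma>) sequentially"
  proof eventually_elim
    case (elim n)
    show ?case
      by (rule lip1_up_to_prod_map_of_approximations[OF mmXn mmYn mmX mmY p_meas p_lip p_prok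
            q_meas q_lip q_prok \<open>x0 \<in> X\<close> less_imp_le[OF R(1)] \<open>y0 \<in> Y\<close> less_imp_le[OF R(2)]
            _ _ _ _ _ _ elim(1)[rule_format]])
        (use elim(2) \<open>\<gamma> > 0\<close> in \<open>simp_all add: D_def\<close>)
  qed
qed

end
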